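(* Let $n\ge1$, $l\ge0$, and define the subgroup of $\mathrm{Br}_{2n+l}$ $$E_{2n,l}:=\left\langle \sigma_{i,j}^{m_{ij}},\ 1\le i<j\le 2n+l\right\rangle,\quad m_{ij}=\begin{cases}1 & i,j\le l,\ \text{or } i>l,\ i\equiv j\ (2)\\ 2 & i\le l<j\\ 3 & i,j>l,\ i\not\equiv j\ (2).\end{cases}$$ Then $E_{2n,l}$ is also generated by $$\sigma_i\ (i<l),\quad \sigma_{i,i+2}\ (l<i\le 2n+l-2),\quad \sigma_{i,j}^2\ (i\le l<j),\quad \sigma_i^3\ (l<i<2n+l,\ i\not\equiv l\ (2)).$$
   Context: $\mathrm{Br}_N=\langle\sigma_1,\dots,\sigma_{N-1}\mid \sigma_i\sigma_{i+1}\sigma_i=\sigma_{i+1}\sigma_i\sigma_{i+1},\ \sigma_i\sigma_j=\sigma_j\sigma_i\ (|i-j|\ge2)\rangle$; $\sigma_{i,i+1}=\sigma_i$ and $\sigma_{i,j}=\sigma_{j-1}\cdots\sigma_{i+1}\sigma_i\sigma_{i+1}^{-1}\cdots\sigma_{j-1}^{-1}$ for $j>i+1$. *)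

theory Defs
  imports Main
begin

text \<open>A letter (i, True) is sigma_i, (i, False) is
  its inverse; valid letters have 1 \<le> i \<le> N-1. Two words represent the same element of
  Br_N iff they are related by the congruence generated by free cancellation and the braid
  relations (monoid presentation of the group).\<close>

type_synonym bword = "(nat \<times> bool) list"

definition valid_word :: "nat \<Rightarrow> bword \<Rightarrow> bool" where
  "valid_word N w \<longleftrightarrow> (\<forall>(i,b)\<in>set w. 1 \<le> i \<and> i < N)"

inductive braid_eq :: "nat \<Rightarrow> bword \<Rightarrow> bword \<Rightarrow> bool" for N where
  refl: "valid_word N w \<Longrightarrow> braid_eq N w w"
| sym: "braid_eq N u v \<Longrightarrow> braid_eq N v u"
| trans: "braid_eq N u v \<Longrightarrow> braid_eq N v w \<Longrightarrow> braid_eq N u w"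
| cancel: "valid_word N u \<Longrightarrow> valid_word N v \<Longrightarrow> 1 \<le> i \<Longrightarrow> i < N \<Longrightarrow>
     braid_eq N (u @ [(i,b),(i,\<not>b)] @ v) (u @ v)"
| braid: "valid_word N u \<Longrightarrow> valid_word N v \<Longrightarrow> 1 \<le> i \<Longrightarrow> i + 1 < N \<Longrightarrow>
     braid_eq N (u @ [(i,True),(i+1,True),(i,True)] @ v) (u @ [(i+1,True),(i,True),(i+1,True)] @ v)"
| comm: "valid_word N u \<Longrightarrow> valid_word N v \<Longrightarrow> 1 \<le> i \<Longrightarrow> i < N \<Longrightarrow> 1 \<le> j \<Longrightarrow> j < N \<Longrightarrow>
     i + 2 \<le> j \<Longrightarrow> braid_eq N (u @ [(i,True),(j,True)] @ v) (u @ [(j,True),(i,True)] @ v)"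

definition winv :: "bword \<Rightarrow> bword" where
  "winv w = rev (map (\<lambda>(i,b). (i, \<not> b)) w)"

definition wpow :: "bword \<Rightarrow> nat \<Rightarrow> bword" where
  "wpow w m = concat (replicate m w)"

text \<open>sigma_{i,j} = sigma_{j-1} ... sigma_{i+1} sigma_i sigma_{i+1}^{-1} ... sigma_{j-1}^{-1}
  (equals sigma_i when j = i+1).\<close>
definition sig :: "nat \<Rightarrow> nat \<Rightarrow> bword" where
  "sig i j = map (\<lambda>k. (k, True)) (rev [i+1..<j]) @ [(i, True)] @ map (\<lambda>k. (k, False)) [i+1..<j]"

definition gen_sub :: "nat \<Rightarrow> bword set \<Rightarrow> bword set" where
  "gen_sub N S = {w. \<exists>xs. (\<forall>(s,b)\<in>set xs. s \<in> S) \<and>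
      braid_eq N w (concat (map (\<lambda>(s,b). if b then s else winv s) xs))}"

definition mexp :: "nat \<Rightarrow> nat \<Rightarrow> nat \<Rightarrow> nat" where
  "mexp l i j = (if (i \<le> l \<and> j \<le> l) \<or> (l < i \<and> i mod 2 = j mod 2) then 1
                 else if i \<le> l \<and> l < j then 2 else 3)"

definition E_gens :: "nat \<Rightarrow> nat \<Rightarrow> bword set" where
  "E_gens n l = {wpow (sig i j) (mexp l i j) | i j. 1 \<le> i \<and> i < j \<and> j \<le> 2*n + l}"

definition E_gens' :: "nat \<Rightarrow> nat \<Rightarrow> bword set" where
  "E_gens' n l =
     {sig i (i+1) | i. 1 \<le> i \<and> i < l}
   \<union> {sig i (i+2) | i. l < i \<and> i \<le> 2*n + l - 2}
   \<union> {wpow (sig i j) 2 | i j. 1 \<le> i \<and> i \<le> l \<and> l < j \<and> j \<le> 2*n + l}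
   \<union> {wpow (sig i (i+1)) 3 | i. l < i \<and> i < 2*n + l \<and> i mod 2 \<noteq> l mod 2}"

end

theory Submission
  imports Defs
begin

text \<open>
  Every member of the second family is itself a generator sigma_{i,j}^m_{ij} of E_{2n,l},
  so one inclusion is immediate. The other rests on the identity
  sigma_{i,k} = sigma_{j,k} sigma_{i,j} sigma_{j,k}^-1 (i < j < k), a consequence of far
  commutativity. For j <= l, sigma_{i,j} is a word in sigma_1, ..., sigma_{l-1}. For
  l < i < j with i, j of equal parity, sigma_{i,j} is built from the steps sigma_{k,k+2}
  by induction on j. The braid relation makes sigma_k conjugate to sigma_{k-1} by
  sigma_{k-1,k+1}; this supplies the cubes sigma_k^3 with k of the parity of l, which are
  not among the generators. Finally, for i, j of different parity, sigma_{i,j}^3 is the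
  conjugate of sigma_i^3 by sigma_{i+1,j}.
\<close>

lemma valid_word_Nil [simp]: "valid_word N []"
  by (simp add: valid_word_def)

lemma valid_word_Cons [simp]: "valid_word N (x # w) \<longleftrightarrow> 1 \<le> fst x \<and> fst x < N \<and> valid_word N w"
  by (cases x) (auto simp: valid_word_def)

lemma valid_word_append [simp]: "valid_word N (u @ v) \<longleftrightarrow> valid_word N u \<and> valid_word N v"
  by (auto simp: valid_word_def)

lemma winv_Nil [simp]: "winv [] = []"
  by (simp add: winv_def)

lemma winv_Cons [simp]: "winv (x # w) = winv w @ [(fst x, \<not> snd x)]"
  by (cases x) (simp add: winv_def)

lemma winv_append [simp]: "winv (u @ v) = winv v @ winv u"
  by (simp add: winv_def)

lemma winv_winv [simp]: "winv (winv w) = w"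
  by (induction w) auto

lemma valid_word_winv [simp]: "valid_word N (winv w) \<longleftrightarrow> valid_word N w"
  by (induction w) auto

lemma wpow_0 [simp]: "wpow w 0 = []"
  by (simp add: wpow_def)

lemma wpow_Suc [simp]: "wpow w (Suc m) = w @ wpow w m"
  by (simp add: wpow_def)

lemma valid_word_wpow: "valid_word N w \<Longrightarrow> valid_word N (wpow w m)"
  by (induction m) auto

declare braid_eq.trans [trans]

lemma braid_eq_valid: "braid_eq N u v \<Longrightarrow> valid_word N u \<and> valid_word N v"
  by (induction rule: braid_eq.induct) auto

lemma braid_eq_context:
  "braid_eq N u v \<Longrightarrow> valid_word N x \<Longrightarrow> valid_word N y \<Longrightarrow> braid_eq N (x @ u @ y) (x @ v @ y)"
proof (induction rule: braid_eq.induct)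
  case (refl w)
  then show ?case by (simp add: braid_eq.refl)
next
  case (sym u v)
  then show ?case by (blast intro: braid_eq.sym)
next
  case (trans u v w)
  then show ?case by (blast intro: braid_eq.trans)
next
  case (cancel u v i b)
  then show ?case using braid_eq.cancel[of N "x @ u" "v @ y" i b] by simp
next
  case (braid u v i)
  then show ?case using braid_eq.braid[of N "x @ u" "v @ y" i] by simp
next
  case (comm u v i j)
  then show ?case using braid_eq.comm[of N "x @ u" "v @ y" i j] by simp
qed

lemma braid_eq_append:
  assumes "braid_eq N u u'" and "braid_eq N v v'"
  shows "braid_eq N (u @ v) (u' @ v')"
proof -
  have valid: "valid_word N u'" "valid_word N v"
    using assms braid_eq_valid by auto
  have "braid_eq N (u @ v) (u' @ v)"
    using braid_eq_context[OF assms(1), of "[]" v] valid by simp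
  also have "braid_eq N (u' @ v) (u' @ v')"
    using braid_eq_context[OF assms(2), of u' "[]"] valid by simp
  finally show ?thesis .
qed

lemma braid_eq_cancel_letters:
  "valid_word N u \<Longrightarrow> valid_word N v \<Longrightarrow> 1 \<le> i \<Longrightarrow> i < N \<Longrightarrow> b \<noteq> c \<Longrightarrow>
    braid_eq N (u @ (i, b) # (i, c) # v) (u @ v)"
  using braid_eq.cancel[of N u v i b] by (cases c) auto

lemma braid_eq_append_winv: "valid_word N w \<Longrightarrow> braid_eq N (w @ winv w) []"
proof (induction w)
  case Nil
  then show ?case by (simp add: braid_eq.refl)
next
  case (Cons x w)
  obtain i b where x: "x = (i, b)" by (cases x)
  have "braid_eq N ((i, b) # w @ winv w @ [(i, \<not> b)]) [(i, b), (i, \<not> b)]"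
    using braid_eq_context[OF Cons.IH, of "[(i, b)]" "[(i, \<not> b)]"] Cons.prems x by simp
  also have "braid_eq N [(i, b), (i, \<not> b)] []"
    using braid_eq_cancel_letters[of N "[]" "[]" i b "\<not> b"] Cons.prems x by simp
  finally show ?case using x by simp
qed

lemma braid_eq_winv_append: "valid_word N w \<Longrightarrow> braid_eq N (winv w @ w) []"
  using braid_eq_append_winv[of N "winv w"] by simp

lemma braid_eq_winv:
  assumes "braid_eq N u v"
  shows "braid_eq N (winv u) (winv v)"
proof -
  have valid: "valid_word N u" "valid_word N v"
    using braid_eq_valid[OF assms] by auto
  have "braid_eq N (winv u) (winv u @ v @ winv v)"
    using braid_eq_context[OF braid_eq_append_winv, of N v "winv u" "[]"] valid
    by (simp add: braid_eq.sym)
  also have "braid_eq N (winv u @ v @ winv v) (winv u @ u @ winv v)"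
    using braid_eq_context[OF braid_eq.sym[OF assms], of "winv u" "winv v"] valid by simp
  also have "braid_eq N (winv u @ u @ winv v) (winv v)"
    using braid_eq_context[OF braid_eq_winv_append, of N u "[]" "winv v"] valid by simp
  finally show ?thesis .
qed

lemma braid_eq_commute_winv:
  assumes "braid_eq N (u @ v) (v @ u)"
  shows "braid_eq N (winv u @ v) (v @ winv u)"
proof -
  have valid: "valid_word N u" "valid_word N v"
    using braid_eq_valid[OF assms] by auto
  have "braid_eq N (winv u @ v) (winv u @ v @ u @ winv u)"
    using braid_eq_context[OF braid_eq_append_winv, of N u "winv u @ v" "[]"] valid
    by (simp add: braid_eq.sym)
  also have "braid_eq N (winv u @ v @ u @ winv u) (winv u @ u @ v @ winv u)"
    using braid_eq_context[OF braid_eq.sym[OF assms], of "winv u" "winv u"] valid by simp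
  also have "braid_eq N (winv u @ u @ v @ winv u) (v @ winv u)"
    using braid_eq_context[OF braid_eq_winv_append, of N u "[]" "v @ winv u"] valid by simp
  finally show ?thesis by simp
qed

lemma braid_eq_commute_letters:
  assumes "1 \<le> i" "i + 2 \<le> j" "j < N"
  shows "braid_eq N [(i, b), (j, c)] [(j, c), (i, b)]"
proof -
  have "braid_eq N ([(i, True)] @ [(j, True)]) ([(j, True)] @ [(i, True)])"
    using braid_eq.comm[of N "[]" "[]" i j] assms by simp
  then have "braid_eq N ([(i, b)] @ [(j, True)]) ([(j, True)] @ [(i, b)])"
    using braid_eq_commute_winv[of N "[(i, True)]" "[(j, True)]"] by (cases b) auto
  then have "braid_eq N ([(j, True)] @ [(i, b)]) ([(i, b)] @ [(j, True)])"
    by (rule braid_eq.sym)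
  then have "braid_eq N ([(j, c)] @ [(i, b)]) ([(i, b)] @ [(j, c)])"
    using braid_eq_commute_winv[of N "[(j, True)]" "[(i, b)]"] by (cases c) auto
  then show ?thesis by (simp add: braid_eq.sym)
qed

lemma braid_eq_commute_far:
  assumes "valid_word N u" "valid_word N v" "\<forall>x\<in>set u. \<forall>y\<in>set v. fst x + 2 \<le> fst y"
  shows "braid_eq N (u @ v) (v @ u)"
  using assms
proof (induction u arbitrary: v)
  case Nil
  then show ?case by (simp add: braid_eq.refl)
next
  case (Cons x u)
  have letter: "braid_eq N (x # v) (v @ [x])"
    using Cons.prems
  proof (induction v)
    case Nil
    then show ?case by (simp add: braid_eq.refl)
  next
    case (Cons y v)
    have "braid_eq N (x # y # v) (y # x # v)"
      using braid_eq_context[OF braid_eq_commute_letters[of "fst x" "fst y" N "snd x" "snd y"],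
          of "[]" v] Cons.prems by simp
    also have "braid_eq N (y # x # v) (y # v @ [x])"
      using braid_eq_context[OF Cons.IH, of "[y]" "[]"] Cons.prems by simp
    finally show ?case by simp
  qed
  have "braid_eq N (x # u @ v) (x # v @ u)"
    using braid_eq_context[OF Cons.IH, of v "[x]" "[]"] Cons.prems by simp
  also have "braid_eq N (x # v @ u) (v @ x # u)"
    using braid_eq_context[OF letter, of "[]" u] Cons.prems by simp
  finally show ?case by simp
qed

lemma braid_eq_conj_wpow:
  assumes "braid_eq N u (X @ v @ winv X)"
  shows "braid_eq N (wpow u m) (X @ wpow v m @ winv X)"
proof (induction m)
  case 0
  have "valid_word N X"
    using braid_eq_valid[OF assms] by simp
  then show ?case
    using braid_eq_append_winv by (simp add: braid_eq.sym)
next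
  case (Suc m)
  have valid: "valid_word N X" "valid_word N (X @ v)" "valid_word N (wpow v m @ winv X)"
    using braid_eq_valid[OF assms] by (auto intro: valid_word_wpow)
  have "braid_eq N (wpow u (Suc m)) (X @ v @ winv X @ X @ wpow v m @ winv X)"
    using braid_eq_append[OF assms Suc.IH] by simp
  also have "braid_eq N (X @ v @ winv X @ X @ wpow v m @ winv X) (X @ v @ wpow v m @ winv X)"
    using braid_eq_context[OF braid_eq_winv_append[of N X], of "X @ v" "wpow v m @ winv X"] valid
    by simp
  finally show ?case by simp
qed

lemma sig_Suc [simp]: "sig i (Suc i) = [(i, True)]"
  by (simp add: sig_def)

lemma set_sig: "i < j \<Longrightarrow> x \<in> set (sig i j) \<Longrightarrow> i \<le> fst x \<and> fst x < j"
  by (auto simp: sig_def)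

lemma valid_word_sig: "1 \<le> i \<Longrightarrow> i < j \<Longrightarrow> j \<le> N \<Longrightarrow> valid_word N (sig i j)"
  by (auto simp: sig_def valid_word_def)

lemma braid_eq_sig_conj:
  assumes "1 \<le> i" "i < j" "j < k" "k \<le> N"
  shows "braid_eq N (sig i k) (sig j k @ sig i j @ winv (sig j k))"
proof -
  define W where "W = map (\<lambda>m. (m, True)) (rev [j+1..<k])"
  define S where "S = sig i j"
  have winv_W: "winv W = map (\<lambda>m. (m, False)) [j+1..<k]"
    by (simp add: W_def winv_def rev_map)
  have sig_jk: "sig j k = W @ (j, True) # winv W"
    unfolding winv_W by (simp add: sig_def W_def)
  have "[i+1..<k] = [i+1..<j] @ j # [j+1..<k]"
    using assms upt_add_eq_append[of "i+1" j "k-j"] by (simp add: upt_conv_Cons)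
  then have sig_ik: "sig i k = W @ (j, True) # S @ (j, False) # winv W"
    unfolding winv_W by (simp add: sig_def W_def S_def)
  have valid: "valid_word N W" "valid_word N S"
    using assms valid_word_sig[of i j N] by (auto simp: W_def S_def valid_word_def)
  have "\<forall>x\<in>set S. \<forall>y\<in>set (winv W). fst x + 2 \<le> fst y"
    using set_sig[of i j] assms by (fastforce simp: S_def winv_W)
  then have far: "braid_eq N (S @ winv W) (winv W @ S)"
    using valid by (intro braid_eq_commute_far) auto
  have "braid_eq N (W @ (j, True) # winv W @ S @ W @ (j, False) # winv W)
      (W @ (j, True) # S @ winv W @ W @ (j, False) # winv W)"
    using braid_eq_context[OF braid_eq.sym[OF far], of "W @ [(j, True)]" "W @ (j, False) # winv W"]
      valid assms by simp
  also have "braid_eq N \<dots> (W @ (j, True) # S @ (j, False) # winv W)"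
    using braid_eq_context[OF braid_eq_winv_append[of N W], of "W @ (j, True) # S" "(j, False) # winv W"]
      valid assms by simp
  finally show ?thesis
    by (simp add: sig_jk sig_ik S_def braid_eq.sym)
qed

lemma braid_eq_conj_adjacent:
  assumes "1 \<le> i" "i + 2 \<le> N"
  shows "braid_eq N (winv (sig i (i + 2)) @ [(i, True)] @ sig i (i + 2)) [(i + 1, True)]"
proof -
  have "winv (sig i (i + 2)) @ [(i, True)] @ sig i (i + 2)
      = [(i+1, True), (i, False), (i+1, False)] @ [(i, True), (i+1, True), (i, True)] @ [(i+1, False)]"
    by (simp add: sig_def winv_def)
  also have "braid_eq N \<dots>
      ([(i+1, True), (i, False), (i+1, False)] @ [(i+1, True), (i, True), (i+1, True)] @ [(i+1, False)])"
    using assms by (intro braid_eq.braid) auto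
  also have "braid_eq N \<dots> [(i+1, True), (i, False), (i, True), (i+1, True), (i+1, False)]"
    using braid_eq_cancel_letters[of N "[(i+1, True), (i, False)]" "[(i, True), (i+1, True), (i+1, False)]"
        "i+1" False True] assms by simp
  also have "braid_eq N \<dots> [(i+1, True), (i+1, True), (i+1, False)]"
    using braid_eq_cancel_letters[of N "[(i+1, True)]" "[(i+1, True), (i+1, False)]" i False True]
      assms by simp
  also have "braid_eq N \<dots> [(i+1, True)]"
    using braid_eq_cancel_letters[of N "[(i+1, True)]" "[]" "i+1" True False] assms by simp
  finally show ?thesis .
qed

definition gen_word :: "(bword \<times> bool) list \<Rightarrow> bword" where
  "gen_word xs = concat (map (\<lambda>(s, b). if b then s else winv s) xs)"

lemma gen_word_Nil [simp]: "gen_word [] = []"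
  by (simp add: gen_word_def)

lemma gen_word_Cons [simp]: "gen_word ((s, b) # xs) = (if b then s else winv s) @ gen_word xs"
  by (simp add: gen_word_def)

lemma gen_word_append [simp]: "gen_word (xs @ ys) = gen_word xs @ gen_word ys"
  by (simp add: gen_word_def)

lemma winv_gen_word: "winv (gen_word xs) = gen_word (rev (map (\<lambda>(s, b). (s, \<not> b)) xs))"
  by (induction xs) (auto simp: gen_word_def)

lemma gen_sub_iff:
  "w \<in> gen_sub N S \<longleftrightarrow> (\<exists>xs. (\<forall>(s, b)\<in>set xs. s \<in> S) \<and> braid_eq N w (gen_word xs))"
  by (simp add: gen_sub_def gen_word_def)

lemma gen_sub_braid_eq: "braid_eq N u v \<Longrightarrow> v \<in> gen_sub N S \<Longrightarrow> u \<in> gen_sub N S"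
  by (auto simp: gen_sub_iff intro: braid_eq.trans)

lemma generator_in_gen_sub: "s \<in> S \<Longrightarrow> valid_word N s \<Longrightarrow> s \<in> gen_sub N S"
  unfolding gen_sub_iff by (intro exI[of _ "[(s, True)]"]) (simp add: gen_word_def braid_eq.refl)

lemma Nil_in_gen_sub: "[] \<in> gen_sub N S"
  unfolding gen_sub_iff by (intro exI[of _ "[]"]) (simp add: braid_eq.refl)

lemma append_in_gen_sub: "u \<in> gen_sub N S \<Longrightarrow> v \<in> gen_sub N S \<Longrightarrow> u @ v \<in> gen_sub N S"
  unfolding gen_sub_iff by (fastforce intro: exI[of _ "_ @ _"] braid_eq_append)

lemma winv_in_gen_sub:
  assumes "u \<in> gen_sub N S"
  shows "winv u \<in> gen_sub N S"
proof -
  obtain xs where "\<forall>(s, b)\<in>set xs. s \<in> S" "braid_eq N u (gen_word xs)"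
    using assms by (auto simp: gen_sub_iff)
  then show ?thesis
    unfolding gen_sub_iff
    by (intro exI[of _ "rev (map (\<lambda>(s, b). (s, \<not> b)) xs)"])
      (auto simp: braid_eq_winv simp flip: winv_gen_word)
qed

lemma conj_in_gen_sub:
  "braid_eq N u (X @ v @ winv X) \<Longrightarrow> X \<in> gen_sub N S \<Longrightarrow> v \<in> gen_sub N S \<Longrightarrow> u \<in> gen_sub N S"
  by (blast intro: gen_sub_braid_eq append_in_gen_sub winv_in_gen_sub)

lemma conj_wpow_in_gen_sub:
  "braid_eq N u (X @ v @ winv X) \<Longrightarrow> X \<in> gen_sub N S \<Longrightarrow> wpow v m \<in> gen_sub N S \<Longrightarrow>
    wpow u m \<in> gen_sub N S"
  by (blast intro: conj_in_gen_sub braid_eq_conj_wpow)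

lemma gen_sub_mono: "S \<subseteq> T \<Longrightarrow> gen_sub N S \<subseteq> gen_sub N T"
  unfolding gen_sub_def by blast

lemma gen_sub_subset:
  assumes "S \<subseteq> gen_sub N T"
  shows "gen_sub N S \<subseteq> gen_sub N T"
proof
  fix w assume "w \<in> gen_sub N S"
  then obtain xs where xs: "\<forall>(s, b)\<in>set xs. s \<in> S" and w: "braid_eq N w (gen_word xs)"
    by (auto simp: gen_sub_iff)
  from xs have "gen_word xs \<in> gen_sub N T"
  proof (induction xs)
    case Nil
    then show ?case by (simp add: Nil_in_gen_sub)
  next
    case (Cons x xs)
    obtain s b where x: "x = (s, b)" by (cases x)
    have "s \<in> gen_sub N T" using Cons.prems x assms by auto
    then have "(if b then s else winv s) \<in> gen_sub N T"
      by (simp add: winv_in_gen_sub)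
    then show ?case
      using Cons x by (simp add: append_in_gen_sub)
  qed
  with w show "w \<in> gen_sub N T" by (rule gen_sub_braid_eq)
qed

lemma letters_in_gen_sub:
  "(\<And>i b. (i, b) \<in> set w \<Longrightarrow> [(i, True)] \<in> gen_sub N S) \<Longrightarrow> w \<in> gen_sub N S"
proof (induction w)
  case Nil
  show ?case by (rule Nil_in_gen_sub)
next
  case (Cons x w)
  obtain i b where x: "x = (i, b)" by (cases x)
  have "[(i, True)] \<in> gen_sub N S" using Cons.prems x by auto
  then have "[(i, b)] \<in> gen_sub N S"
    using winv_in_gen_sub[of "[(i, True)]"] by (cases b) auto
  moreover have "w \<in> gen_sub N S" using Cons by auto
  ultimately show ?case
    using append_in_gen_sub[of "[(i, b)]" N S w] x by simp
qed

lemma sig_in_gen_sub_of_steps: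
  assumes "\<And>k. i \<le> k \<Longrightarrow> k + 2 \<le> i + 2 * d \<Longrightarrow> sig k (k + 2) \<in> gen_sub N S"
    and "1 \<le> i" "0 < d" "i + 2 * d \<le> N"
  shows "sig i (i + 2 * d) \<in> gen_sub N S"
  using assms
proof (induction d)
  case 0
  then show ?case by simp
next
  case (Suc d)
  show ?case
  proof (cases "d = 0")
    case True
    then show ?thesis using Suc.prems(1)[of i] by simp
  next
    case False
    define j where "j = i + 2 * d"
    have "sig i j \<in> gen_sub N S"
      using Suc False by (simp add: j_def)
    moreover have "sig j (j + 2) \<in> gen_sub N S"
      using Suc.prems(1) by (simp add: j_def)
    moreover have "braid_eq N (sig i (j + 2)) (sig j (j + 2) @ sig i j @ winv (sig j (j + 2)))"
      using Suc.prems False by (intro braid_eq_sig_conj) (auto simp: j_def)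
    ultimately show ?thesis
      by (simp add: conj_in_gen_sub j_def)
  qed
qed

lemma letter_in_E_gens':
  assumes "1 \<le> i" "i < l"
  shows "[(i, True)] \<in> gen_sub (2*n + l) (E_gens' n l)"
proof (rule generator_in_gen_sub)
  have "sig i (i + 1) \<in> E_gens' n l"
    using assms unfolding E_gens'_def by blast
  then show "[(i, True)] \<in> E_gens' n l" by simp
  show "valid_word (2*n + l) [(i, True)]"
    using assms by simp
qed

lemma sig_step_in_E_gens':
  assumes "l < i" "i + 2 \<le> 2*n + l"
  shows "sig i (i + 2) \<in> gen_sub (2*n + l) (E_gens' n l)"
proof (rule generator_in_gen_sub)
  show "sig i (i + 2) \<in> E_gens' n l"
    using assms unfolding E_gens'_def by (intro UnI1 UnI2) auto
  show "valid_word (2*n + l) (sig i (i + 2))"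
    using assms by (intro valid_word_sig) auto
qed

lemma sig_square_in_E_gens':
  "1 \<le> i \<Longrightarrow> i \<le> l \<Longrightarrow> l < j \<Longrightarrow> j \<le> 2*n + l \<Longrightarrow>
    wpow (sig i j) 2 \<in> gen_sub (2*n + l) (E_gens' n l)"
  by (rule generator_in_gen_sub) (auto simp: E_gens'_def intro!: valid_word_wpow valid_word_sig)

lemma letter_cube_generator_in_E_gens':
  assumes "l < i" "i < 2*n + l" "i mod 2 \<noteq> l mod 2"
  shows "wpow [(i, True)] 3 \<in> gen_sub (2*n + l) (E_gens' n l)"
proof (rule generator_in_gen_sub)
  have "wpow (sig i (i + 1)) 3 \<in> E_gens' n l"
    using assms unfolding E_gens'_def by blast
  then show "wpow [(i, True)] 3 \<in> E_gens' n l" by simp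
  show "valid_word (2*n + l) (wpow [(i, True)] 3)"
    using assms by (intro valid_word_wpow) simp
qed

lemma letter_cube_in_E_gens':
  assumes "l < k" "k < 2*n + l"
  shows "wpow [(k, True)] 3 \<in> gen_sub (2*n + l) (E_gens' n l)"
proof (cases "k mod 2 = l mod 2")
  case False
  then show ?thesis
    using assms by (intro letter_cube_generator_in_E_gens') auto
next
  case True
  then have "k \<noteq> l + 1" "k + 1 \<noteq> 2*n + l"
    by presburger+
  define i where "i = k - 1"
  have i: "k = i + 1" "l < i" "i + 2 \<le> 2*n + l"
    using assms \<open>k \<noteq> l + 1\<close> \<open>k + 1 \<noteq> 2*n + l\<close> unfolding i_def by linarith+
  have "i mod 2 \<noteq> l mod 2"
    using True \<open>k = i + 1\<close> by presburger
  then have "wpow [(i, True)] 3 \<in> gen_sub (2*n + l) (E_gens' n l)"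
    using i by (intro letter_cube_generator_in_E_gens') auto
  moreover have "braid_eq (2*n + l) [(k, True)]
      (winv (sig i (i + 2)) @ [(i, True)] @ winv (winv (sig i (i + 2))))"
    using braid_eq_conj_adjacent[of i "2*n + l"] i by (simp add: braid_eq.sym)
  moreover have "winv (sig i (i + 2)) \<in> gen_sub (2*n + l) (E_gens' n l)"
    using i by (intro winv_in_gen_sub sig_step_in_E_gens')
  ultimately show ?thesis
    by (blast intro: conj_wpow_in_gen_sub)
qed

lemma sig_below_in_E_gens':
  assumes "1 \<le> i" "i < j" "j \<le> l"
  shows "sig i j \<in> gen_sub (2*n + l) (E_gens' n l)"
proof (rule letters_in_gen_sub)
  fix k b assume "(k, b) \<in> set (sig i j)"
  then show "[(k, True)] \<in> gen_sub (2*n + l) (E_gens' n l)"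
    using assms set_sig[of i j "(k, b)"] by (intro letter_in_E_gens') auto
qed

lemma sig_same_parity_in_E_gens':
  assumes "l < i" "i < j" "j \<le> 2*n + l" "i mod 2 = j mod 2"
  shows "sig i j \<in> gen_sub (2*n + l) (E_gens' n l)"
proof -
  have "\<exists>d. j = i + 2 * d"
    using assms(2,4) by presburger
  then obtain d where d: "j = i + 2 * d" ..
  then have "sig i (i + 2 * d) \<in> gen_sub (2*n + l) (E_gens' n l)"
    using assms by (intro sig_in_gen_sub_of_steps sig_step_in_E_gens') auto
  with d show ?thesis by simp
qed

lemma sig_cube_in_E_gens':
  assumes "l < i" "i < j" "j \<le> 2*n + l" "i mod 2 \<noteq> j mod 2"
  shows "wpow (sig i j) 3 \<in> gen_sub (2*n + l) (E_gens' n l)"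
proof (cases "j = i + 1")
  case True
  then show ?thesis
    using assms by (simp add: letter_cube_in_E_gens')
next
  case False
  have parity: "(i + 1) mod 2 = j mod 2"
    using assms(4) by presburger
  have "braid_eq (2*n + l) (sig i j) (sig (i + 1) j @ [(i, True)] @ winv (sig (i + 1) j))"
    using braid_eq_sig_conj[of i "i + 1" j "2*n + l"] assms False by simp
  moreover have "sig (i + 1) j \<in> gen_sub (2*n + l) (E_gens' n l)"
    using assms False parity by (intro sig_same_parity_in_E_gens') auto
  moreover have "wpow [(i, True)] 3 \<in> gen_sub (2*n + l) (E_gens' n l)"
    using assms by (intro letter_cube_in_E_gens') auto
  ultimately show ?thesis
    by (rule conj_wpow_in_gen_sub)
qed

lemma E_gens_subset_gen_sub_E_gens': "E_gens n l \<subseteq> gen_sub (2*n + l) (E_gens' n l)"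
proof
  fix s assume "s \<in> E_gens n l"
  then obtain i j where s: "s = wpow (sig i j) (mexp l i j)" and ij: "1 \<le> i" "i < j" "j \<le> 2*n + l"
    unfolding E_gens_def by blast
  consider "j \<le> l" | "l < i" "i mod 2 = j mod 2" | "i \<le> l" "l < j" | "l < i" "i mod 2 \<noteq> j mod 2"
    using ij by linarith
  then show "s \<in> gen_sub (2*n + l) (E_gens' n l)"
  proof cases
    case 1
    then show ?thesis using s ij by (simp add: mexp_def sig_below_in_E_gens')
  next
    case 2
    then show ?thesis using s ij by (simp add: mexp_def sig_same_parity_in_E_gens')
  next
    case 3
    then show ?thesis using s ij by (simp add: mexp_def sig_square_in_E_gens')
  next
    case 4
    then show ?thesis using s ij by (simp add: mexp_def sig_cube_in_E_gens')
  qed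
qed

lemma in_E_gensI:
  "1 \<le> i \<Longrightarrow> i < j \<Longrightarrow> j \<le> 2*n + l \<Longrightarrow> s = wpow (sig i j) (mexp l i j) \<Longrightarrow> s \<in> E_gens n l"
  unfolding E_gens_def by blast

lemma E_gens'_subset_E_gens: "E_gens' n l \<subseteq> E_gens n l"
proof
  fix s assume "s \<in> E_gens' n l"
  then consider (letter) i where "s = sig i (i + 1)" "1 \<le> i" "i < l"
    | (step) i where "s = sig i (i + 2)" "l < i" "i \<le> 2*n + l - 2"
    | (square) i j where "s = wpow (sig i j) 2" "1 \<le> i" "i \<le> l" "l < j" "j \<le> 2*n + l"
    | (cube) i where "s = wpow (sig i (i + 1)) 3" "l < i" "i < 2*n + l"
    unfolding E_gens'_def by blast
  then show "s \<in> E_gens n l"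
  proof cases
    case letter
    then show ?thesis by (intro in_E_gensI[of i "i + 1"]) (auto simp: mexp_def)
  next
    case step
    moreover have "(i + 2) mod 2 = i mod 2" by simp
    ultimately show ?thesis by (intro in_E_gensI[of i "i + 2"]) (auto simp: mexp_def)
  next
    case square
    then show ?thesis by (intro in_E_gensI[of i j]) (auto simp: mexp_def)
  next
    case cube
    moreover have "(i + 1) mod 2 \<noteq> i mod 2" by presburger
    ultimately show ?thesis by (intro in_E_gensI[of i "i + 1"]) (auto simp: mexp_def)
  qed
qed

theorem mainTheorem15:
  fixes n l :: nat
  assumes "n \<ge> 1"
  shows "gen_sub (2*n + l) (E_gens n l) = gen_sub (2*n + l) (E_gens' n l)"
  using gen_sub_subset[OF E_gens_subset_gen_sub_E_gens'] gen_sub_mono[OF E_gens'_subset_E_gens]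
  by (rule antisym)

end
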